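(* Let $Q$ be the quiver with one vertex and $2e$ loops, $e\ge1$, and let $d\geq 1$, $v\in\mathbb{Z}$. Then $S^d_v$ consists of the partitions $d=d_1+\dots+d_k$ such that for all $1\le i\le k$ $$\tfrac12 d_i\Big(\sum_{j<i}d_j-\sum_{j>i}d_j\Big)+\frac{vd_i}{d}\in\mathbb{Z}.$$ Moreover, $S^d_v=\{d\}$ if and only if either $\gcd(d,v)=1$ and $d\not\equiv2\pmod 4$, or $\gcd(d,v)=2$ and $d\equiv2\pmod4$.
   Context: Here $R(d)=\mathfrak{gl}(d)^{\oplus 2e}$ with $G(d)=GL(d)$ acting by conjugation, $\mathfrak{g}(d)=\mathfrak{gl}(d)$, diagonal torus with weights $\beta_1,\dots,\beta_d$, $\tau_d=\frac1d\sum_a\beta_a$. For a cocharacter $\lambda$, $n_\lambda=\langle\lambda,\det(R(d)^\vee)^{\lambda>0}\rangle-\langle\lambda,\det(\mathfrak{g}(d)^\vee)^{\lambda>0}\rangle$ ($V^{\lambda>0}$: span of weights pairing positively with $\lambda$). A cocharacter has associated partition $(d_j)_j$ if its $j$-th distinct weight on $\beta_1,\dots,\beta_d$ occurs $d_j$ times. $S^d_v$ is the set of partitions of $d$ such that $n_\lambda/2+\langle\lambda,v\tau_d\rangle\in\mathbb{Z}$ for every cocharacter $\lambda$ with that associated partition; $\{d\}$ denotes the one-term partition. *)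

theory Defs
  imports Complex_Main
begin

text \<open>Weights of the maximal torus of GL(d) are encoded as integer coefficient
  vectors w :: nat \<Rightarrow> int, meaning sum over a<d of w a * beta_a.
  Cocharacters are integer vectors lam :: nat \<Rightarrow> int (only entries a<d matter).\<close>

definition pair :: "nat \<Rightarrow> (nat \<Rightarrow> int) \<Rightarrow> (nat \<Rightarrow> int) \<Rightarrow> int" where
  "pair d lam w = (\<Sum>a<d. lam a * w a)"

definition root :: "nat \<Rightarrow> nat \<Rightarrow> (nat \<Rightarrow> int)" where
  "root a b = (\<lambda>x. (if x = a then 1 else 0) - (if x = b then 1 else 0))"

definition gl_weights :: "nat \<Rightarrow> (nat \<Rightarrow> int) list" where
  "gl_weights d = concat (map (\<lambda>a. map (\<lambda>b. root a b) [0..<d]) [0..<d])"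

definition dual_weights :: "(nat \<Rightarrow> int) list \<Rightarrow> (nat \<Rightarrow> int) list" where
  "dual_weights W = map (\<lambda>w x. - w x) W"

text \<open>weights of R(d) = gl(d)^(2e)\<close>
definition R_weights :: "nat \<Rightarrow> nat \<Rightarrow> (nat \<Rightarrow> int) list" where
  "R_weights d e = concat (replicate (2*e) (gl_weights d))"

text \<open>pairing of lam with det(V^{lam>0}), V given by its list of weights\<close>
definition det_pos_pair :: "nat \<Rightarrow> (nat \<Rightarrow> int) \<Rightarrow> (nat \<Rightarrow> int) list \<Rightarrow> int" where
  "det_pos_pair d lam W = sum_list (filter (\<lambda>t. t > 0) (map (pair d lam) W))"

definition n_lam :: "nat \<Rightarrow> nat \<Rightarrow> (nat \<Rightarrow> int) \<Rightarrow> int" where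
  "n_lam d e lam = det_pos_pair d lam (dual_weights (R_weights d e))
                   - det_pos_pair d lam (dual_weights (gl_weights d))"

text \<open>pairing of lam with tau_d = (1/d) sum beta_a\<close>
definition tau_pair :: "nat \<Rightarrow> (nat \<Rightarrow> int) \<Rightarrow> real" where
  "tau_pair d lam = (\<Sum>a<d. real_of_int (lam a)) / real d"

text \<open>associated partition: the j-th distinct value of lam on 0..d-1
  (values listed in increasing order) occurs d_j times\<close>
definition assoc_partition :: "nat \<Rightarrow> (nat \<Rightarrow> int) \<Rightarrow> nat list" where
  "assoc_partition d lam =
     map (\<lambda>c. card {a \<in> {0..<d}. lam a = c}) (sorted_list_of_set (lam ` {0..<d}))"

definition is_partition :: "nat \<Rightarrow> nat list \<Rightarrow> bool" where
  "is_partition d p \<longleftrightarrow> (\<forall>x\<in>set p. x > 0) \<and> sum_list p = d"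

definition S_set :: "nat \<Rightarrow> nat \<Rightarrow> int \<Rightarrow> nat list set" where
  "S_set d e v = {p. is_partition d p \<and>
      (\<forall>lam. assoc_partition d lam = p \<longrightarrow>
         real_of_int (n_lam d e lam) / 2 + real_of_int v * tau_pair d lam \<in> \<int>)}"

end

theory Submission
  imports Defs
begin

text \<open>Group the coordinates of a cocharacter \<open>\<lambda>\<close> by its distinct values
  \<open>c\<^sub>1 < \<dots> < c\<^sub>k\<close>, taken with multiplicities \<open>d\<^sub>1, \<dots>, d\<^sub>k\<close>. With \<open>Q\<close> the
  sum of the positive gaps \<open>\<lambda>\<^sub>b - \<lambda>\<^sub>a\<close> one has \<open>n\<^sub>\<lambda> = (2e - 1) Q\<close>, and
  \<open>n\<^sub>\<lambda>/2 + \<langle>\<lambda>, v \<tau>\<^sub>d\<rangle> = (e - 1) Q + \<Sum>\<^sub>i c\<^sub>i A\<^sub>i\<close>, where \<open>A\<^sub>i\<close> is the expression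
  of the statement. Every strictly increasing choice of the \<open>c\<^sub>i\<close> is realised by a
  cocharacter; the choices \<open>c\<^sub>j = j + [j \<ge> i]\<close> and \<open>c\<^sub>j = j + [j > i]\<close> give sums
  differing by exactly \<open>A\<^sub>i\<close>. So integrality for all cocharacters of a given type means
  \<open>A\<^sub>i \<in> \<int>\<close> for all \<open>i\<close>.

  For the second claim only \<open>A\<^sub>1\<close> matters: a partition with first part \<open>x\<close> has
  \<open>A\<^sub>1 = v x / d - x (d - x) / 2\<close>, and for the partition \<open>(x, d - x)\<close> also
  \<open>A\<^sub>2 = v - A\<^sub>1\<close>. So \<open>S\<^sup>d\<^sub>v = {d}\<close> iff no \<open>0 < x < d\<close> satisfies
  \<open>2d | 2vx - dx(d - x)\<close>. Under the gcd conditions such an \<open>x\<close> must be \<open>d/2\<close>, which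
  contradicts a parity constraint; otherwise \<open>x = d/2\<close> or \<open>x = 2d / gcd d v\<close> works.\<close>

section \<open>The weight sum \<open>n\<^sub>\<lambda>\<close>\<close>

lemma sum_list_filter_pos:
  fixes xs :: "'a::linordered_ab_group_add list"
  shows "sum_list (filter (\<lambda>t. t > 0) xs) = sum_list (map (\<lambda>t. max t 0) xs)"
  by (induction xs) auto

lemma sum_list_concat: "sum_list (concat xss) = sum_list (map sum_list xss)"
  by (induction xss) simp_all

definition pos_gap_sum :: "nat \<Rightarrow> (nat \<Rightarrow> int) \<Rightarrow> int" where
  "pos_gap_sum d lam = (\<Sum>a<d. \<Sum>b<d. max (lam b - lam a) 0)"

lemma det_pos_pair_concat_replicate:
  "det_pos_pair d lam (dual_weights (concat (replicate n W))) =
    int n * det_pos_pair d lam (dual_weights W)"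
  by (induction n) (auto simp: det_pos_pair_def dual_weights_def algebra_simps)

lemma pair_neg_root: "a < d \<Longrightarrow> b < d \<Longrightarrow> pair d lam (\<lambda>x. - root a b x) = lam b - lam a"
  by (simp add: pair_def root_def right_diff_distrib sum_subtractf if_distrib[of "(*) (lam _)"]
      cong: if_cong)

lemma det_pos_pair_gl_weights:
  "det_pos_pair d lam (dual_weights (gl_weights d)) = pos_gap_sum d lam"
  by (simp add: det_pos_pair_def dual_weights_def gl_weights_def sum_list_filter_pos map_concat
      comp_def pos_gap_sum_def pair_neg_root sum_list_concat interv_sum_list_conv_sum_set_nat
      atLeast0LessThan)

lemma n_lam_eq: "n_lam d e lam = (2 * int e - 1) * pos_gap_sum d lam"
  by (simp add: n_lam_def R_weights_def det_pos_pair_concat_replicate det_pos_pair_gl_weights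
      algebra_simps)

section \<open>Grouping a cocharacter by its values\<close>

lemma sum_pos_gaps_sorted:
  fixes c :: "'a::linordered_idom list" and D :: "nat \<Rightarrow> 'a"
  assumes "sorted_wrt (<) c" and "k = length c"
  shows "(\<Sum>i<k. \<Sum>j<k. D i * D j * max (c!j - c!i) 0) =
         (\<Sum>i<k. c!i * D i * ((\<Sum>j<i. D j) - (\<Sum>j\<in>{i<..<k}. D j)))"
proof -
  have upper: "(\<Sum>j<k. D i * D j * max (c!j - c!i) 0) = (\<Sum>j\<in>{i<..<k}. D i * D j * (c!j - c!i))"
    if "i < k" for i
  proof -
    have "{i<..<k} = {j\<in>{..<k}. i < j}" by auto
    moreover have "max (c!j - c!i) 0 = (if i < j then c!j - c!i else 0)" if "j < k" for j
      using assms \<open>i < k\<close> that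
      by (cases i j rule: linorder_cases) (auto simp: sorted_wrt_iff_nth_less)
    ultimately show ?thesis
      by (simp add: sum.inter_filter[symmetric] if_distrib[of "(*) (D i * D _)"] cong: if_cong)
  qed
  have lower: "(\<Sum>i<k. \<Sum>j\<in>{i<..<k}. D i * D j * c!j) = (\<Sum>j<k. c!j * D j * (\<Sum>i<j. D i))"
  proof -
    have "(\<Sum>i<k. \<Sum>j\<in>{i<..<k}. D i * D j * c!j) = (\<Sum>j<k. \<Sum>i\<in>{i\<in>{..<k}. i < j}. D i * D j * c!j)"
      using sum.swap_restrict[of "{..<k}" "{..<k}" "\<lambda>i j. D i * D j * c!j" "(<)"]
      by (simp add: greaterThanLessThan_def greaterThan_def lessThan_def Collect_conj_eq
          conj_commute)
    also have "\<dots> = (\<Sum>j<k. c!j * D j * (\<Sum>i<j. D i))"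
      by (intro sum.cong) (auto simp: sum_distrib_left algebra_simps intro!: sum.cong)
    finally show ?thesis .
  qed
  have "(\<Sum>i<k. \<Sum>j<k. D i * D j * max (c!j - c!i) 0)
      = (\<Sum>i<k. \<Sum>j\<in>{i<..<k}. D i * D j * c!j - D i * D j * c!i)"
    by (rule sum.cong[OF refl]) (simp add: upper right_diff_distrib)
  also have "\<dots> = (\<Sum>i<k. \<Sum>j\<in>{i<..<k}. D i * D j * c!j) - (\<Sum>i<k. c!i * D i * (\<Sum>j\<in>{i<..<k}. D j))"
    by (simp add: sum_subtractf sum_distrib_left algebra_simps)
  finally show ?thesis
    by (simp add: lower sum_subtractf right_diff_distrib)
qed

definition assoc_values :: "nat \<Rightarrow> (nat \<Rightarrow> int) \<Rightarrow> int list" where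
  "assoc_values d lam = sorted_list_of_set (lam ` {0..<d})"

lemma length_assoc_partition: "length (assoc_partition d lam) = length (assoc_values d lam)"
  by (simp add: assoc_partition_def assoc_values_def)

lemma sorted_assoc_values: "sorted_wrt (<) (assoc_values d lam)"
  unfolding assoc_values_def by (rule strict_sorted_list_of_set)

lemma sum_by_assoc_values:
  fixes f :: "int \<Rightarrow> 'a::comm_semiring_1"
  shows "(\<Sum>a<d. f (lam a)) = (\<Sum>i<length (assoc_partition d lam).
      of_nat (assoc_partition d lam ! i) * f (assoc_values d lam ! i))"
proof -
  have "(\<Sum>a<d. f (lam a)) = (\<Sum>a\<in>{0..<d}. f (lam a))"
    by (simp add: atLeast0LessThan)
  also have "\<dots> = (\<Sum>c\<in>lam ` {0..<d}. \<Sum>a\<in>{a\<in>{0..<d}. lam a = c}. f (lam a))"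
    by (rule sum.image_gen) simp
  also have "\<dots> = (\<Sum>c\<in>lam ` {0..<d}. of_nat (card {a\<in>{0..<d}. lam a = c}) * f c)"
    by (rule sum.cong) auto
  also have "\<dots> =
      sum_list (map (\<lambda>c. of_nat (card {a\<in>{0..<d}. lam a = c}) * f c) (assoc_values d lam))"
    unfolding assoc_values_def by (subst sum_list_distinct_conv_sum_set) auto
  also have "\<dots> = (\<Sum>i<length (assoc_partition d lam).
      of_nat (assoc_partition d lam ! i) * f (assoc_values d lam ! i))"
    by (simp add: length_assoc_partition sum_list_sum_nth atLeast0LessThan assoc_partition_def
        assoc_values_def)
  finally show ?thesis .
qed

lemma pos_gap_sum_by_assoc_values:
  fixes d :: nat and lam :: "nat \<Rightarrow> int"
  defines "p \<equiv> assoc_partition d lam" and "c \<equiv> assoc_values d lam"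
  shows "pos_gap_sum d lam =
    (\<Sum>i<length p. c!i * int (p!i) * ((\<Sum>j<i. int (p!j)) - (\<Sum>j\<in>{i<..<length p}. int (p!j))))"
proof -
  have "pos_gap_sum d lam = (\<Sum>a<d. \<Sum>j<length p. int (p!j) * max (c!j - lam a) 0)"
    unfolding pos_gap_sum_def p_def c_def by (subst sum_by_assoc_values) (rule refl)
  also have "\<dots> = (\<Sum>i<length p. int (p!i) * (\<Sum>j<length p. int (p!j) * max (c!j - c!i) 0))"
    unfolding p_def c_def by (rule sum_by_assoc_values)
  also have "\<dots> = (\<Sum>i<length p. \<Sum>j<length p. int (p!i) * int (p!j) * max (c!j - c!i) 0)"
    by (simp add: sum_distrib_left mult.assoc)
  also have "\<dots> = (\<Sum>i<length p.
      c!i * int (p!i) * ((\<Sum>j<i. int (p!j)) - (\<Sum>j\<in>{i<..<length p}. int (p!j))))"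
    unfolding p_def c_def
    by (rule sum_pos_gaps_sorted[OF sorted_assoc_values length_assoc_partition])
  finally show ?thesis .
qed

definition part_term :: "nat \<Rightarrow> int \<Rightarrow> nat list \<Rightarrow> nat \<Rightarrow> real" where
  "part_term d v p i = (1/2) * real (p ! i) *
      (real (\<Sum>j<i. p ! j) - real (\<Sum>j\<in>{i<..<length p}. p ! j))
    + real_of_int v * real (p ! i) / real d"

lemma half_n_lam_add_tau_pair:
  fixes d :: nat and lam :: "nat \<Rightarrow> int"
  defines "p \<equiv> assoc_partition d lam" and "c \<equiv> assoc_values d lam"
  shows "real_of_int (n_lam d e lam) / 2 + real_of_int v * tau_pair d lam =
    real_of_int ((int e - 1) * pos_gap_sum d lam)
    + (\<Sum>i<length p. real_of_int (c!i) * part_term d v p i)"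
proof -
  have "real_of_int (pos_gap_sum d lam) / 2 + real_of_int v * tau_pair d lam =
      (\<Sum>i<length p. real_of_int (c!i) * part_term d v p i)"
    unfolding pos_gap_sum_by_assoc_values tau_pair_def sum_by_assoc_values[of real_of_int]
      part_term_def
    by (simp add: p_def c_def sum_divide_distrib sum_distrib_left sum.distrib[symmetric]
        diff_divide_distrib algebra_simps)
  then show ?thesis
    by (simp add: n_lam_eq field_simps)
qed

section \<open>Realising partitions by cocharacters\<close>

lemma assoc_partition_realization:
  fixes C :: "nat \<Rightarrow> int"
  assumes part: "is_partition d p" and mono: "strict_mono_on {..<length p} C"
  obtains lam where "assoc_partition d lam = p" and "assoc_values d lam = map C [0..<length p]"
proof
  define k where "k = length p"
  define xs where "xs = concat (map (\<lambda>i. replicate (p!i) (C i)) [0..<k])"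
  have pos: "p!i > 0" if "i < k" for i
    using part that unfolding is_partition_def k_def by auto
  have C_eq_iff: "C i = C j \<longleftrightarrow> i = j" if "i < k" "j < k" for i j
    using strict_mono_on_eqD[OF mono] that unfolding k_def by auto
  have len: "length xs = d"
    using part by (simp add: xs_def k_def length_concat comp_def map_nth is_partition_def)
  have "(!) xs ` {0..<d} = set xs"
    by (auto simp: len[symmetric] set_conv_nth)
  also have "\<dots> = C ` {..<k}"
    using pos by (auto simp: xs_def)
  finally have "(!) xs ` {0..<d} = C ` {..<k}" .
  moreover have "sorted_wrt (<) (map C [0..<k])"
    using mono by (auto simp: sorted_wrt_iff_nth_less k_def strict_mono_on_def)
  ultimately show lam_values: "assoc_values d ((!) xs) = map C [0..<length p]"
    unfolding assoc_values_def k_def[symmetric]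
    by (intro strict_sorted_equal) auto
  have count: "card {a \<in> {0..<d}. xs ! a = C i} = p!i" if "i < k" for i
  proof -
    have "card {a \<in> {0..<d}. xs ! a = C i} = length (filter (\<lambda>y. y = C i) xs)"
      by (simp add: length_filter_conv_card len atLeast0LessThan conj_commute)
    also have "\<dots> = (\<Sum>j<k. if C j = C i then p!j else 0)"
      by (simp add: xs_def filter_concat length_concat comp_def filter_replicate
          interv_sum_list_conv_sum_set_nat atLeast0LessThan if_distrib[of length] cong: if_cong)
    also have "\<dots> = (\<Sum>j<k. if j = i then p!j else 0)"
      using that by (intro sum.cong) (auto simp: C_eq_iff)
    also have "\<dots> = p!i"
      using that by simp
    finally show ?thesis .
  qed
  show "assoc_partition d ((!) xs) = p"
    unfolding assoc_partition_def assoc_values_def[symmetric] lam_values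
    by (rule nth_equalityI) (simp_all add: k_def[symmetric] count del: atLeastLessThan_iff)
qed

lemma integral_for_all_cocharacters_iff:
  assumes part: "is_partition d p"
  shows "(\<forall>lam. assoc_partition d lam = p \<longrightarrow>
            real_of_int (n_lam d e lam) / 2 + real_of_int v * tau_pair d lam \<in> \<int>) \<longleftrightarrow>
         (\<forall>i<length p. part_term d v p i \<in> \<int>)"
proof
  assume integral: "\<forall>lam. assoc_partition d lam = p \<longrightarrow>
    real_of_int (n_lam d e lam) / 2 + real_of_int v * tau_pair d lam \<in> \<int>"
  have weighted: "(\<Sum>i<length p. real_of_int (C i) * part_term d v p i) \<in> \<int>"
    if mono: "strict_mono_on {..<length p} C" for C
  proof -
    obtain lam where lam: "assoc_partition d lam = p" "assoc_values d lam = map C [0..<length p]"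
      using assoc_partition_realization[OF part mono] .
    then have "(\<Sum>i<length p. real_of_int (C i) * part_term d v p i) =
        real_of_int (n_lam d e lam) / 2 + real_of_int v * tau_pair d lam
        - real_of_int ((int e - 1) * pos_gap_sum d lam)"
      by (simp add: half_n_lam_add_tau_pair)
    then show ?thesis
      using integral lam(1) by simp
  qed
  show "\<forall>i<length p. part_term d v p i \<in> \<int>"
  proof (intro allI impI)
    fix m assume m: "m < length p"
    define C :: "nat \<Rightarrow> nat \<Rightarrow> int" where "C t i = int i + (if t \<le> i then 1 else 0)" for t i
    have "strict_mono_on {..<length p} (C t)" for t
      by (auto simp: strict_mono_on_def C_def)
    then have "(\<Sum>i<length p. real_of_int (C m i - C (Suc m) i) * part_term d v p i) \<in> \<int>"
      by (simp add: left_diff_distrib sum_subtractf weighted)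
    moreover have "real_of_int (C m i - C (Suc m) i) * part_term d v p i =
        (if i = m then part_term d v p i else 0)" for i
      by (simp add: C_def)
    ultimately show "part_term d v p m \<in> \<int>"
      using m by simp
  qed
next
  assume "\<forall>i<length p. part_term d v p i \<in> \<int>"
  then show "\<forall>lam. assoc_partition d lam = p \<longrightarrow>
    real_of_int (n_lam d e lam) / 2 + real_of_int v * tau_pair d lam \<in> \<int>"
    by (auto simp: half_n_lam_add_tau_pair intro!: Ints_add Ints_mult)
qed

definition integral_partitions :: "nat \<Rightarrow> int \<Rightarrow> nat list set" where
  "integral_partitions d v = {p. is_partition d p \<and> (\<forall>i<length p. part_term d v p i \<in> \<int>)}"

lemma S_set_eq_integral_partitions: "S_set d e v = integral_partitions d v"
  unfolding S_set_def integral_partitions_def using integral_for_all_cocharacters_iff by blast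

section \<open>When \<open>S\<^sup>d\<^sub>v\<close> is a singleton\<close>

definition split_term :: "nat \<Rightarrow> int \<Rightarrow> nat \<Rightarrow> real" where
  "split_term d v x = real_of_int v * real x / real d - real x * (real d - real x) / 2"

lemma part_term_first:
  assumes "is_partition d p" and "p \<noteq> []"
  shows "part_term d v p 0 = split_term d v (p ! 0)"
proof -
  have "{..<length p} = insert 0 {0<..<length p}"
    using assms(2) by auto
  then have "d = p ! 0 + (\<Sum>j\<in>{0<..<length p}. p ! j)"
    using assms(1) by (simp add: is_partition_def sum_list_sum_nth atLeast0LessThan)
  then show ?thesis
    by (simp add: part_term_def split_term_def algebra_simps)
qed

lemma first_part_bounds:
  assumes "is_partition d p" and "p \<noteq> []" and "p \<noteq> [d]"
  shows "0 < p ! 0" and "p ! 0 < d"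
proof -
  obtain x q where p: "p = x # q"
    using assms(2) by (cases p) auto
  have "0 < x" and pos: "\<forall>y\<in>set q. 0 < y" and d: "d = x + sum_list q"
    using assms(1) by (simp_all add: p is_partition_def)
  have "q \<noteq> []"
    using assms(3) d p by auto
  then have "0 < sum_list q"
    using pos by (cases q) auto
  then show "0 < p ! 0" and "p ! 0 < d"
    using \<open>0 < x\<close> d p by simp_all
qed

lemma singleton_in_integral_partitions:
  assumes "0 < d"
  shows "[d] \<in> integral_partitions d v"
  using assms by (simp add: integral_partitions_def is_partition_def part_term_def)

lemma two_parts_in_integral_partitions:
  assumes "0 < x" and "x < d" and "split_term d v x \<in> \<int>"
  shows "[x, d - x] \<in> integral_partitions d v"
proof -
  have "{0<..<2::nat} = {1}" and "{1<..<2::nat} = {}"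
    by auto
  then have "part_term d v [x, d - x] 0 = split_term d v x"
    and "part_term d v [x, d - x] 1 = real_of_int v - split_term d v x"
    using assms(1,2) by (simp_all add: part_term_def split_term_def field_simps)
  then show ?thesis
    using assms by (auto simp: integral_partitions_def is_partition_def less_Suc_eq)
qed

lemma integral_partitions_eq_singleton_iff:
  assumes "0 < d"
  shows "integral_partitions d v = {[d]} \<longleftrightarrow> \<not> (\<exists>x. 0 < x \<and> x < d \<and> split_term d v x \<in> \<int>)"
proof
  assume only: "integral_partitions d v = {[d]}"
  show "\<not> (\<exists>x. 0 < x \<and> x < d \<and> split_term d v x \<in> \<int>)"
  proof
    assume "\<exists>x. 0 < x \<and> x < d \<and> split_term d v x \<in> \<int>"
    then obtain x where "0 < x" "x < d" "split_term d v x \<in> \<int>"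
      by blast
    then show False
      using two_parts_in_integral_partitions[of x d v] only by auto
  qed
next
  assume none: "\<not> (\<exists>x. 0 < x \<and> x < d \<and> split_term d v x \<in> \<int>)"
  have "p = [d]" if p: "p \<in> integral_partitions d v" for p
  proof (rule ccontr)
    assume "p \<noteq> [d]"
    moreover have "p \<noteq> []" and part: "is_partition d p"
      using p assms by (auto simp: integral_partitions_def is_partition_def)
    moreover have "part_term d v p 0 \<in> \<int>"
      using p \<open>p \<noteq> []\<close> by (simp add: integral_partitions_def)
    ultimately show False
      using none first_part_bounds[of d p] part_term_first[of d p v] by auto
  qed
  then show "integral_partitions d v = {[d]}"
    using singleton_in_integral_partitions[OF assms] by blast
qed

lemma dvd_half_split_iff:
  fixes h v :: int
  assumes "h \<noteq> 0"
  shows "(4 * h) dvd (2 * h * (v - h * h)) \<longleftrightarrow> even (v - h)"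
proof -
  have "(4 * h) dvd (2 * h * (v - h * h)) \<longleftrightarrow> 2 dvd (v - h * h)"
    using assms dvd_mult_cancel_left[of "2 * h" 2 "v - h * h"] by simp
  also have "\<dots> \<longleftrightarrow> even (v - h)"
    by simp
  finally show ?thesis .
qed

definition gcd_condition :: "int \<Rightarrow> int \<Rightarrow> bool" where
  "gcd_condition d v \<longleftrightarrow> (gcd d v = 1 \<and> d mod 4 \<noteq> 2) \<or> (gcd d v = 2 \<and> d mod 4 = 2)"

lemma split_dvd_imp_not_gcd_condition:
  fixes d v x :: int
  assumes x: "0 < x" "x < d" and split: "(2 * d) dvd (2 * v * x - d * x * (d - x))"
  shows "\<not> gcd_condition d v"
proof
  assume cond: "gcd_condition d v"
  have "d dvd 2 * v * x"
  proof -
    have "2 * v * x = (2 * v * x - d * x * (d - x)) + d * (x * (d - x))"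
      by (simp add: algebra_simps)
    then show ?thesis
      by (metis dvd_add dvd_mult_right[OF split] dvd_triv_left)
  qed
  have at_half: "d = 2 * x" if "d dvd 2 * x"
  proof (rule ccontr)
    assume "d \<noteq> 2 * x"
    moreover have "d dvd 2 * x - d"
      using that by simp
    ultimately have "\<bar>d\<bar> \<le> \<bar>2 * x - d\<bar>"
      by (intro dvd_imp_le_int) auto
    then show False
      using x by linarith
  qed
  have half_parity: "even (v - x)" if "d = 2 * x"
  proof -
    have "(4 * x) dvd (2 * x * (v - x * x))"
      using split by (simp add: that algebra_simps)
    then show ?thesis
      using x by (simp add: dvd_half_split_iff)
  qed
  from cond consider (coprime) "gcd d v = 1" "d mod 4 \<noteq> 2" | (two) "gcd d v = 2" "d mod 4 = 2"
    unfolding gcd_condition_def by blast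
  then show False
  proof cases
    case coprime
    have "d dvd v * (2 * x)"
      using \<open>d dvd 2 * v * x\<close> by (simp add: ac_simps)
    then have "d dvd 2 * x"
      using coprime(1) coprime_dvd_mult_right_iff[of d v "2 * x"]
      by (simp add: coprime_iff_gcd_eq_1)
    then have "d = 2 * x"
      by (rule at_half)
    then have "even x" and "even v"
      using coprime(2) half_parity by presburger+
    then have "2 dvd gcd d v"
      using \<open>d = 2 * x\<close> by simp
    then show False
      using coprime(1) by simp
  next
    case two
    have "even d"
      using two(2) by presburger
    then obtain m where d: "d = 2 * m" ..
    obtain w where v: "v = 2 * w"
      using two(1) gcd_dvd2[of d v] by (auto elim: evenE)
    have "odd m"
      using two(2) d by presburger
    have "gcd m w = 1"
      using two(1) by (simp add: d v gcd_mult_left)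
    then have "coprime m (2 * w)"
      using \<open>odd m\<close> by (simp add: coprime_iff_gcd_eq_1[symmetric])
    moreover have "m dvd 2 * w * x"
      using \<open>d dvd 2 * v * x\<close> dvd_mult_cancel_left[of 2 m "2 * w * x"] by (simp add: d v mult.assoc)
    ultimately have "m dvd x"
      by (simp add: coprime_dvd_mult_right_iff)
    then have "d = 2 * x"
      by (intro at_half) (simp add: d)
    then have "odd v"
      using half_parity \<open>odd m\<close> d by simp
    then show False
      using v by simp
  qed
qed

lemma not_gcd_condition_imp_split_dvd:
  fixes d v :: int
  assumes "0 < d" and "\<not> gcd_condition d v"
  shows "\<exists>x. 0 < x \<and> x < d \<and> (2 * d) dvd (2 * v * x - d * x * (d - x))"
proof -
  define g where "g = gcd d v"
  have "0 < g"
    using assms(1) by (simp add: g_def)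
  consider (large) "3 \<le> g" | (small) "g = 1 \<or> g = 2"
    using \<open>0 < g\<close> by linarith
  then show ?thesis
  proof cases
    case large
    obtain M where d: "d = g * M"
      unfolding g_def by (metis gcd_dvd1 dvdE)
    obtain w where v: "v = g * w"
      unfolding g_def by (metis gcd_dvd2 dvdE)
    have "0 < M"
      using assms(1) \<open>0 < g\<close> by (simp add: d zero_less_mult_iff)
    moreover have "2 * M < d"
      using large \<open>0 < M\<close> by (simp add: d)
    moreover have "2 * v * (2 * M) - d * (2 * M) * (d - 2 * M) =
        (2 * d) * (2 * w - (g - 2) * M * M)"
      by (simp add: d v algebra_simps)
    ultimately show ?thesis
      by (intro exI[of _ "2 * M"]) auto
  next
    case small
    have "\<exists>h. d = 2 * h \<and> even (v - h)"
    proof (cases "g = 1")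
      case True
      then have "d mod 4 = 2"
        using assms(2) by (simp add: gcd_condition_def g_def)
      then have "even d"
        by presburger
      then obtain h where h: "d = 2 * h" ..
      have "odd h"
        using \<open>d mod 4 = 2\<close> h by presburger
      moreover have "odd v"
        using True h unfolding g_def by (metis dvd_triv_left gcd_greatest_iff odd_one)
      ultimately show ?thesis
        using h by auto
    next
      case False
      then have "g = 2" and "d mod 4 \<noteq> 2"
        using small assms(2) by (auto simp: gcd_condition_def g_def)
      then have "even d" and "even v"
        unfolding g_def by (metis gcd_dvd1, metis gcd_dvd2)
      obtain h where h: "d = 2 * h"
        using \<open>even d\<close> ..
      have "even h"
        using \<open>d mod 4 \<noteq> 2\<close> h by presburger
      then show ?thesis
        using \<open>even v\<close> h by auto
    qed
    then obtain h where h: "d = 2 * h" "even (v - h)"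
      by blast
    then have "0 < h"
      using assms(1) by simp
    then have "(2 * d) dvd (2 * v * h - d * h * (d - h))"
      using h dvd_half_split_iff[of h v] by (simp add: algebra_simps)
    then show ?thesis
      using \<open>0 < h\<close> h(1) by (intro exI[of _ h]) simp
  qed
qed

lemma gcd_condition_int_iff:
  "gcd_condition (int d) v \<longleftrightarrow> (gcd (int d) v = 1 \<and> d mod 4 \<noteq> 2) \<or> (gcd (int d) v = 2 \<and> d mod 4 = 2)"
proof -
  have "int d mod 4 = int (d mod 4)"
    by (simp add: of_nat_mod)
  then show ?thesis
    by (simp add: gcd_condition_def)
qed

lemma split_term_in_Ints_iff:
  assumes "0 < d"
  shows "split_term d v x \<in> \<int> \<longleftrightarrow> (2 * int d) dvd (2 * v * int x - int d * int x * (int d - int x))"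
proof -
  have quotient: "split_term d v x =
      of_int (2 * v * int x - int d * int x * (int d - int x)) / of_int (2 * int d)"
    using assms by (simp add: split_term_def field_simps)
  show ?thesis
    unfolding quotient of_int_div_of_int_in_Ints_iff using assms by simp
qed

lemma proper_split_exists_iff:
  assumes "0 < d"
  shows "(\<exists>x. 0 < x \<and> x < d \<and> split_term d v x \<in> \<int>) \<longleftrightarrow> \<not> gcd_condition (int d) v"
proof
  assume "\<exists>x. 0 < x \<and> x < d \<and> split_term d v x \<in> \<int>"
  then obtain x where "0 < x" "x < d" "split_term d v x \<in> \<int>"
    by blast
  then show "\<not> gcd_condition (int d) v"
    using assms split_dvd_imp_not_gcd_condition[of "int x" "int d" v]
    by (simp add: split_term_in_Ints_iff)
next
  assume "\<not> gcd_condition (int d) v"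
  then obtain y where y: "0 < y" "y < int d" "(2 * int d) dvd (2 * v * y - int d * y * (int d - y))"
    using assms not_gcd_condition_imp_split_dvd[of "int d" v] by auto
  then have "split_term d v (nat y) \<in> \<int>"
    using assms by (simp add: split_term_in_Ints_iff)
  then show "\<exists>x. 0 < x \<and> x < d \<and> split_term d v x \<in> \<int>"
    using y by (intro exI[of _ "nat y"]) auto
qed

theorem lemma8p6:
  fixes d e :: nat and v :: int
  assumes "e \<ge> 1" and "d \<ge> 1"
  shows "S_set d e v =
           {p. is_partition d p \<and>
               (\<forall>i<length p.
                  (1/2) * real (p ! i) *
                    (real (\<Sum>j<i. p ! j) - real (\<Sum>j\<in>{i<..<length p}. p ! j))
                  + real_of_int v * real (p ! i) / real d \<in> \<int>)}
       \<and> (S_set d e v = {[d]} \<longleftrightarrow>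
            (gcd (int d) v = 1 \<and> d mod 4 \<noteq> 2) \<or> (gcd (int d) v = 2 \<and> d mod 4 = 2))"
proof -
  have "0 < d"
    using assms(2) by simp
  have "S_set d e v = integral_partitions d v"
    by (rule S_set_eq_integral_partitions)
  moreover have "integral_partitions d v = {[d]} \<longleftrightarrow> gcd_condition (int d) v"
    using integral_partitions_eq_singleton_iff[OF \<open>0 < d\<close>] proper_split_exists_iff[OF \<open>0 < d\<close>]
    by simp
  ultimately show ?thesis
    by (simp add: integral_partitions_def part_term_def gcd_condition_int_iff)
qed

end
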